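(* There exist a nondeterministic probabilistic automaton $\mathcal{B}$, a regular predicate $\varphi$ and an observation function $\mathcal{O}$ such that the value $\widehat{\mathrm{PO}^A_r}(\mathcal{B},\varphi,\mathcal{O}) = \min_{\sigma} \mathrm{PO}^A_r(\mathcal{B}_{/\sigma},\varphi,\mathcal{O})$ (minimum over all schedulers $\sigma$) cannot be reached by a memoryless scheduler.
   Context: A nondeterministic probabilistic automaton (NPA) is a tuple $\langle \Sigma, Q, \Delta, q_0 \rangle$ with $\Sigma$ a finite alphabet, $Q$ a finite set of states, $q_0$ the initial state, and $\Delta$ mapping each state to a finite set of probability distributions over $(\Sigma \times Q) \uplus \{\mathrm{stop}\}$, where $\mathrm{stop}$ is a special termination action. A scheduler is a function $\sigma$ from finite runs of the NPA to distributions over such distributions, with $\sigma(\rho)(\nu)>0$ only if $\nu \in \Delta(\text{last state of }\rho)$; it is memoryless if $\sigma(\rho)$ depends only on the last state of $\rho$. The scheduled automaton $\mathcal{B}_{/\sigma}$ is the (possibly infinite) fully probabilistic automaton whose states are runs, with $\Delta'(\rho)(a,\rho\xrightarrow{a}q') = \sum_{\mu \in \Delta(q)} \sigma(\rho)(\mu)\cdot\mu(a,q')$ ($q$ the last state of $\rho$), and similarly for termination. On a fully probabilistic automaton with distribution $\mathbf{P}$ on complete runs (finite runs followed by termination), restrictive probabilistic opacity is defined by $\frac{1}{\mathrm{PO}^A_r(\mathcal{A},\varphi,\mathcal{O})} = \sum_{o} \mathbf{P}(\mathcal{O}=o)/\mathbf{P}(\mathbf{1}_\varphi=0\mid\mathcal{O}=o)$.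 *)

theory Defs
  imports "HOL-Probability.Probability"
begin

text \<open>A distribution over
  (Sigma x Q) + {stop} is a pmf on option type, None being the stop action.
  A finite run from q0 is the list of its transitions (a_1,q_1)...(a_n,q_n).\<close>

definition npa :: "'a set \<Rightarrow> 's set \<Rightarrow> ('s \<Rightarrow> ('a \<times> 's) option pmf set) \<Rightarrow> 's \<Rightarrow> bool" where
  "npa Sig Q Delta q0 \<longleftrightarrow> finite Sig \<and> finite Q \<and> q0 \<in> Q \<and>
     (\<forall>q\<in>Q. finite (Delta q) \<and> Delta q \<noteq> {} \<and>
        (\<forall>\<mu>\<in>Delta q. \<forall>x\<in>set_pmf \<mu>. case x of None \<Rightarrow> True | Some (a, q') \<Rightarrow> a \<in> Sig \<and> q' \<in> Q))"

definition last_state :: "'s \<Rightarrow> ('a \<times> 's) list \<Rightarrow> 's" where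
  "last_state q0 \<rho> = (if \<rho> = [] then q0 else snd (last \<rho>))"

definition scheduler :: "'a set \<Rightarrow> 's set \<Rightarrow> ('s \<Rightarrow> ('a \<times> 's) option pmf set) \<Rightarrow> 's
    \<Rightarrow> (('a \<times> 's) list \<Rightarrow> ('a \<times> 's) option pmf pmf) \<Rightarrow> bool" where
  "scheduler Sig Q Delta q0 \<sigma> \<longleftrightarrow>
     (\<forall>\<rho>\<in>lists (Sig \<times> Q). set_pmf (\<sigma> \<rho>) \<subseteq> Delta (last_state q0 \<rho>))"

definition memoryless_scheduler :: "'a set \<Rightarrow> 's set \<Rightarrow> ('s \<Rightarrow> ('a \<times> 's) option pmf set) \<Rightarrow> 's
    \<Rightarrow> (('a \<times> 's) list \<Rightarrow> ('a \<times> 's) option pmf pmf) \<Rightarrow> bool" where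
  "memoryless_scheduler Sig Q Delta q0 \<sigma> \<longleftrightarrow> scheduler Sig Q Delta q0 \<sigma> \<and>
     (\<forall>\<rho>\<in>lists (Sig \<times> Q). \<forall>\<rho>'\<in>lists (Sig \<times> Q).
        last_state q0 \<rho> = last_state q0 \<rho>' \<longrightarrow> \<sigma> \<rho> = \<sigma> \<rho>')"

definition sched_step :: "(('a \<times> 's) list \<Rightarrow> ('a \<times> 's) option pmf pmf) \<Rightarrow> ('a \<times> 's) list \<Rightarrow> ('a \<times> 's) option pmf" where
  "sched_step \<sigma> \<rho> = join_pmf (\<sigma> \<rho>)"

text \<open>Probability P of the complete run rho (rho followed by termination) in B/sigma.\<close>
definition run_prob :: "(('a \<times> 's) list \<Rightarrow> ('a \<times> 's) option pmf pmf) \<Rightarrow> ('a \<times> 's) list \<Rightarrow> real" where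
  "run_prob \<sigma> \<rho> = (\<Prod>i<length \<rho>. pmf (sched_step \<sigma> (take i \<rho>)) (Some (\<rho> ! i)))
                     * pmf (sched_step \<sigma> \<rho>) None"

definition prob_obs :: "'a set \<Rightarrow> 's set \<Rightarrow> (('a \<times> 's) list \<Rightarrow> ('a \<times> 's) option pmf pmf)
    \<Rightarrow> (('a \<times> 's) list \<Rightarrow> 'o) \<Rightarrow> 'o \<Rightarrow> ennreal" where
  "prob_obs Sig Q \<sigma> Obs ob = (\<Sum>\<^sub>\<infinity>\<rho>\<in>{\<rho>\<in>lists (Sig \<times> Q). Obs \<rho> = ob}. ennreal (run_prob \<sigma> \<rho>))"

definition prob_obs_notphi :: "'a set \<Rightarrow> 's set \<Rightarrow> (('a \<times> 's) list \<Rightarrow> ('a \<times> 's) option pmf pmf)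
    \<Rightarrow> ('a \<times> 's) list set \<Rightarrow> (('a \<times> 's) list \<Rightarrow> 'o) \<Rightarrow> 'o \<Rightarrow> ennreal" where
  "prob_obs_notphi Sig Q \<sigma> phi Obs ob =
     (\<Sum>\<^sub>\<infinity>\<rho>\<in>{\<rho>\<in>lists (Sig \<times> Q). Obs \<rho> = ob \<and> \<rho> \<notin> phi}. ennreal (run_prob \<sigma> \<rho>))"

text \<open>1/PO = sum_o P(O=o) / P(1_phi=0 | O=o), computed in ennreal
  (x/0 = infinity for x>0, 0/0 = 0); PO is its inverse (1/infinity = 0).\<close>
definition inv_PO :: "'a set \<Rightarrow> 's set \<Rightarrow> (('a \<times> 's) list \<Rightarrow> ('a \<times> 's) option pmf pmf)
    \<Rightarrow> ('a \<times> 's) list set \<Rightarrow> (('a \<times> 's) list \<Rightarrow> 'o) \<Rightarrow> ennreal" where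
  "inv_PO Sig Q \<sigma> phi Obs =
     (\<Sum>\<^sub>\<infinity>ob. prob_obs Sig Q \<sigma> Obs ob
              / (prob_obs_notphi Sig Q \<sigma> phi Obs ob / prob_obs Sig Q \<sigma> Obs ob))"

definition PO_r :: "'a set \<Rightarrow> 's set \<Rightarrow> (('a \<times> 's) list \<Rightarrow> ('a \<times> 's) option pmf pmf)
    \<Rightarrow> ('a \<times> 's) list set \<Rightarrow> (('a \<times> 's) list \<Rightarrow> 'o) \<Rightarrow> ennreal" where
  "PO_r Sig Q \<sigma> phi Obs = inverse (inv_PO Sig Q \<sigma> phi Obs)"

definition regular_lang :: "'c list set \<Rightarrow> bool" where
  "regular_lang L \<longleftrightarrow> (\<exists>(D::nat set) \<delta> d0 F. finite D \<and> d0 \<in> D \<and> F \<subseteq> D \<and>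
      (\<forall>d\<in>D. \<forall>x. \<delta> d x \<in> D) \<and> L = {w. foldl \<delta> d0 w \<in> F})"

text \<open>Observation functions: static projections of the trace (erasing/renaming actions).\<close>
definition proj_obs :: "('a \<Rightarrow> 'b option) \<Rightarrow> ('a \<times> 's) list \<Rightarrow> 'b list" where
  "proj_obs obs \<rho> = List.map_filter (\<lambda>(a, q). obs a) \<rho>"

end

theory Submission
  imports Defs
begin

text \<open>From state 0 a fair coin chooses action 0 or 1, both leading to state 1, where the scheduler
  either stops or emits the only observable action 2 and stops. The secret \<open>\<phi>\<close> is "the first action
  was 0". A memoryless scheduler cannot tell the two runs through state 1 apart, so both observations
  leave the secret perfectly uncertain and \<open>1/PO\<close> stays finite. A scheduler with memory continues
  only after action 1; then observing immediate termination reveals \<open>\<phi>\<close>, the corresponding summand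
  of \<open>1/PO\<close> is infinite, and \<open>PO = 0\<close>.\<close>

definition enabled :: "('s \<Rightarrow> ('a \<times> 's) option pmf set) \<Rightarrow> 's \<Rightarrow> ('a \<times> 's) option set" where
  "enabled Delta q = (\<Union>\<mu>\<in>Delta q. set_pmf \<mu>)"

definition complete_path :: "('s \<Rightarrow> ('a \<times> 's) option pmf set) \<Rightarrow> 's \<Rightarrow> ('a \<times> 's) list \<Rightarrow> bool" where
  "complete_path Delta q0 \<rho> \<longleftrightarrow>
     (\<forall>i<length \<rho>. Some (\<rho> ! i) \<in> enabled Delta (last_state q0 (take i \<rho>))) \<and>
     None \<in> enabled Delta (last_state q0 \<rho>)"

lemma set_pmf_sched_step:
  assumes "scheduler Sig Q Delta q0 \<sigma>" "\<rho> \<in> lists (Sig \<times> Q)"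
  shows "set_pmf (sched_step \<sigma> \<rho>) \<subseteq> enabled Delta (last_state q0 \<rho>)"
proof -
  have "set_pmf (\<sigma> \<rho>) \<subseteq> Delta (last_state q0 \<rho>)"
    using assms unfolding scheduler_def by blast
  then show ?thesis
    unfolding sched_step_def enabled_def by auto
qed

lemma run_prob_nonneg: "0 \<le> run_prob \<sigma> \<rho>"
  by (simp add: run_prob_def prod_nonneg)

lemma run_prob_eq_0_if_not_complete_path:
  assumes "scheduler Sig Q Delta q0 \<sigma>" "\<rho> \<in> lists (Sig \<times> Q)" "\<not> complete_path Delta q0 \<rho>"
  shows "run_prob \<sigma> \<rho> = 0"
proof (rule ccontr)
  assume "run_prob \<sigma> \<rho> \<noteq> 0"
  then have "(\<Prod>i<length \<rho>. pmf (sched_step \<sigma> (take i \<rho>)) (Some (\<rho> ! i))) \<noteq> 0"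
    and "pmf (sched_step \<sigma> \<rho>) None \<noteq> 0"
    unfolding run_prob_def by simp_all
  then have steps: "\<forall>i<length \<rho>. Some (\<rho> ! i) \<in> set_pmf (sched_step \<sigma> (take i \<rho>))"
    and stop: "None \<in> set_pmf (sched_step \<sigma> \<rho>)"
    by (simp_all add: set_pmf_iff)
  have "take i \<rho> \<in> lists (Sig \<times> Q)" for i
    using assms(2) by (meson in_listsD in_listsI in_set_takeD)
  then have "Some (\<rho> ! i) \<in> enabled Delta (last_state q0 (take i \<rho>))" if "i < length \<rho>" for i
    using steps that set_pmf_sched_step[OF assms(1)] by blast
  moreover have "None \<in> enabled Delta (last_state q0 \<rho>)"
    using stop set_pmf_sched_step[OF assms(1,2)] by blast
  ultimately have "complete_path Delta q0 \<rho>"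
    unfolding complete_path_def by blast
  with assms(3) show False by contradiction
qed

lemma infsum_eq_sum_if_zero_outside:
  fixes f :: "'a \<Rightarrow> 'b::{comm_monoid_add, t2_space}"
  assumes "finite R" "\<And>x. x \<in> A \<Longrightarrow> x \<notin> R \<Longrightarrow> f x = 0"
  shows "infsum f A = (\<Sum>x\<in>R. if x \<in> A then f x else 0)"
proof -
  have "infsum f A = infsum f (R \<inter> A)"
    by (rule infsum_cong_neutral) (use assms(2) in blast)+
  also have "\<dots> = (\<Sum>x\<in>R. if x \<in> A then f x else 0)"
    using assms(1) by (simp add: sum.inter_restrict)
  finally show ?thesis .
qed

lemma infsum_run_prob_eq_sum_over_complete_paths:
  assumes "scheduler Sig Q Delta q0 \<sigma>" "finite R"
    and "\<And>\<rho>. complete_path Delta q0 \<rho> \<Longrightarrow> \<rho> \<in> R"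
  shows "(\<Sum>\<^sub>\<infinity>\<rho>\<in>{\<rho>\<in>lists (Sig \<times> Q). P \<rho>}. ennreal (run_prob \<sigma> \<rho>)) =
         (\<Sum>\<rho>\<in>R. if \<rho> \<in> lists (Sig \<times> Q) \<and> P \<rho> then ennreal (run_prob \<sigma> \<rho>) else 0)"
proof -
  have zero: "ennreal (run_prob \<sigma> \<rho>) = 0" if "\<rho> \<in> {\<rho>\<in>lists (Sig \<times> Q). P \<rho>}" "\<rho> \<notin> R" for \<rho>
  proof -
    have "\<not> complete_path Delta q0 \<rho>"
      using that(2) assms(3) by blast
    moreover have "\<rho> \<in> lists (Sig \<times> Q)"
      using that(1) by (simp only: mem_Collect_eq)
    ultimately show ?thesis
      using run_prob_eq_0_if_not_complete_path[OF assms(1)] by simp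
  qed
  have "(\<Sum>\<^sub>\<infinity>\<rho>\<in>{\<rho>\<in>lists (Sig \<times> Q). P \<rho>}. ennreal (run_prob \<sigma> \<rho>)) =
        (\<Sum>\<rho>\<in>R. if \<rho> \<in> {\<rho>\<in>lists (Sig \<times> Q). P \<rho>} then ennreal (run_prob \<sigma> \<rho>) else 0)"
    by (rule infsum_eq_sum_if_zero_outside[OF assms(2) zero])
  then show ?thesis
    by (simp only: mem_Collect_eq)
qed

lemma sched_step_eq_if_memoryless:
  assumes "memoryless_scheduler Sig Q Delta q0 \<sigma>" "\<rho> \<in> lists (Sig \<times> Q)" "\<rho>' \<in> lists (Sig \<times> Q)"
    and "last_state q0 \<rho> = last_state q0 \<rho>'"
  shows "sched_step \<sigma> \<rho> = sched_step \<sigma> \<rho>'"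
proof -
  have "\<sigma> \<rho> = \<sigma> \<rho>'"
    using assms unfolding memoryless_scheduler_def by blast
  then show ?thesis
    by (simp only: sched_step_def)
qed

lemma last_state_in_states:
  assumes "q0 \<in> Q" "\<rho> \<in> lists (Sig \<times> Q)"
  shows "last_state q0 \<rho> \<in> Q"
proof (cases "\<rho> = []")
  case False
  then have "last \<rho> \<in> Sig \<times> Q"
    using assms(2) last_in_set by blast
  with False show ?thesis
    by (auto simp: last_state_def)
qed (simp add: last_state_def assms(1))

lemma run_prob_singleton:
  "run_prob \<sigma> [x] = pmf (sched_step \<sigma> []) (Some x) * pmf (sched_step \<sigma> [x]) None"
  by (simp add: run_prob_def)

lemma run_prob_pair:
  "run_prob \<sigma> [x, y] =
     pmf (sched_step \<sigma> []) (Some x) * pmf (sched_step \<sigma> [x]) (Some y) * pmf (sched_step \<sigma> [x, y]) None"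
  by (simp add: run_prob_def lessThan_Suc)

definition fair_coin :: "(nat \<times> nat) option pmf" where
  "fair_coin = pmf_of_set {Some (0, 1), Some (1, 1)}"

definition ex_Delta :: "nat \<Rightarrow> (nat \<times> nat) option pmf set" where
  "ex_Delta q =
     (if q = 0 then {fair_coin}
      else if q = 1 then {return_pmf None, return_pmf (Some (2, 2))}
      else {return_pmf None})"

definition ex_states :: "nat set" where
  "ex_states = {0, 1, 2}"

definition ex_dfa :: "nat \<Rightarrow> nat \<times> nat \<Rightarrow> nat" where
  "ex_dfa d x = (if d = 0 then (if fst x = 0 then 1 else 2) else d)"

definition ex_phi :: "(nat \<times> nat) list set" where
  "ex_phi = {w. foldl ex_dfa 0 w \<in> {1}}"

definition ex_obs :: "nat \<Rightarrow> nat option" where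
  "ex_obs a = (if a = 2 then Some 2 else None)"

definition ex_complete_runs :: "(nat \<times> nat) list set" where
  "ex_complete_runs = {[(0, 1)], [(1, 1)], [(0, 1), (2, 2)], [(1, 1), (2, 2)]}"

lemma pmf_fair_coin: "pmf fair_coin x = (if x = Some (0, 1) \<or> x = Some (1, 1) then 1 / 2 else 0)"
  unfolding fair_coin_def by (subst pmf_of_set) auto

lemma set_pmf_fair_coin: "set_pmf fair_coin = {Some (0, 1), Some (1, 1)}"
  unfolding fair_coin_def by simp

lemma npa_ex: "npa ex_states ex_states ex_Delta 0"
  unfolding npa_def ex_Delta_def ex_states_def by (auto simp: set_pmf_fair_coin)

lemma regular_lang_ex_phi: "regular_lang ex_phi"
  unfolding regular_lang_def ex_phi_def
  by (rule exI[of _ "{0, 1, 2}"], rule exI[of _ ex_dfa], rule exI[of _ 0], rule exI[of _ "{1}"])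
    (auto simp: ex_dfa_def)

lemma enabled_ex_Delta:
  "enabled ex_Delta q =
     (if q = 0 then {Some (0, 1), Some (1, 1)} else if q = 1 then {None, Some (2, 2)} else {None})"
  by (auto simp: enabled_def ex_Delta_def set_pmf_fair_coin)

lemma complete_path_ex_in_ex_complete_runs:
  assumes "complete_path ex_Delta 0 \<rho>"
  shows "\<rho> \<in> ex_complete_runs"
proof -
  have step: "Some (\<rho> ! i) \<in> enabled ex_Delta (last_state 0 (take i \<rho>))" if "i < length \<rho>" for i
    using assms that unfolding complete_path_def by blast
  have stop: "None \<in> enabled ex_Delta (last_state 0 \<rho>)"
    using assms unfolding complete_path_def by blast
  consider "\<rho> = []" | x where "\<rho> = [x]" | x y where "\<rho> = [x, y]" | x y z r where "\<rho> = x # y # z # r"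
    by (metis list.exhaust)
  then show ?thesis
  proof cases
    case 1
    then show ?thesis using stop by (simp add: enabled_ex_Delta last_state_def)
  next
    case (2 x)
    then show ?thesis using step[of 0] by (auto simp: enabled_ex_Delta last_state_def ex_complete_runs_def)
  next
    case (3 x y)
    then show ?thesis using step[of 0] step[of 1]
      by (auto simp: enabled_ex_Delta last_state_def ex_complete_runs_def)
  next
    case (4 x y z r)
    then show ?thesis using step[of 0] step[of 1] step[of 2]
      by (auto simp: enabled_ex_Delta last_state_def)
  qed
qed

lemma finite_ex_complete_runs: "finite ex_complete_runs"
  by (simp add: ex_complete_runs_def)

lemma sched_step_Nil_ex:
  assumes "scheduler ex_states ex_states ex_Delta 0 \<sigma>"
  shows "sched_step \<sigma> [] = fair_coin"
proof -
  have "set_pmf (\<sigma> []) \<subseteq> ex_Delta (last_state 0 ([] :: (nat \<times> nat) list))"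
    using assms unfolding scheduler_def by blast
  then have "\<sigma> [] = return_pmf fair_coin"
    by (simp add: last_state_def ex_Delta_def set_pmf_subset_singleton)
  then show ?thesis
    by (simp add: sched_step_def join_return_pmf)
qed

lemma prob_obs_ex:
  assumes "scheduler ex_states ex_states ex_Delta 0 \<sigma>"
  shows "prob_obs ex_states ex_states \<sigma> (proj_obs ex_obs) ob =
    (if ob = [] then ennreal (run_prob \<sigma> [(0, 1)]) + ennreal (run_prob \<sigma> [(1, 1)])
     else if ob = [2] then ennreal (run_prob \<sigma> [(0, 1), (2, 2)]) + ennreal (run_prob \<sigma> [(1, 1), (2, 2)])
     else 0)" (is "_ = ?rhs")
proof -
  have "prob_obs ex_states ex_states \<sigma> (proj_obs ex_obs) ob =
      (\<Sum>\<rho>\<in>ex_complete_runs. if \<rho> \<in> lists (ex_states \<times> ex_states) \<and> proj_obs ex_obs \<rho> = ob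
         then ennreal (run_prob \<sigma> \<rho>) else 0)"
    unfolding prob_obs_def
    by (rule infsum_run_prob_eq_sum_over_complete_paths[OF assms finite_ex_complete_runs complete_path_ex_in_ex_complete_runs])
  also have "\<dots> = ?rhs"
    by (simp add: ex_complete_runs_def ex_states_def proj_obs_def ex_obs_def)
  finally show ?thesis .
qed

lemma prob_obs_notphi_ex:
  assumes "scheduler ex_states ex_states ex_Delta 0 \<sigma>"
  shows "prob_obs_notphi ex_states ex_states \<sigma> ex_phi (proj_obs ex_obs) ob =
    (if ob = [] then ennreal (run_prob \<sigma> [(1, 1)])
     else if ob = [2] then ennreal (run_prob \<sigma> [(1, 1), (2, 2)])
     else 0)" (is "_ = ?rhs")
proof -
  have "prob_obs_notphi ex_states ex_states \<sigma> ex_phi (proj_obs ex_obs) ob =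
      (\<Sum>\<rho>\<in>ex_complete_runs. if \<rho> \<in> lists (ex_states \<times> ex_states) \<and> proj_obs ex_obs \<rho> = ob \<and> \<rho> \<notin> ex_phi
         then ennreal (run_prob \<sigma> \<rho>) else 0)"
    unfolding prob_obs_notphi_def
    by (rule infsum_run_prob_eq_sum_over_complete_paths[OF assms finite_ex_complete_runs complete_path_ex_in_ex_complete_runs])
  also have "\<dots> = ?rhs"
    by (simp add: ex_complete_runs_def ex_states_def proj_obs_def ex_obs_def ex_phi_def ex_dfa_def)
  finally show ?thesis .
qed

lemma inv_PO_ex:
  assumes sched: "scheduler ex_states ex_states ex_Delta 0 \<sigma>"
  defines "p \<equiv> \<lambda>\<rho>. ennreal (run_prob \<sigma> \<rho>)"
  shows "inv_PO ex_states ex_states \<sigma> ex_phi (proj_obs ex_obs) =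
    (p [(0, 1)] + p [(1, 1)]) / (p [(1, 1)] / (p [(0, 1)] + p [(1, 1)])) +
    (p [(0, 1), (2, 2)] + p [(1, 1), (2, 2)]) / (p [(1, 1), (2, 2)] / (p [(0, 1), (2, 2)] + p [(1, 1), (2, 2)]))"
proof -
  have "prob_obs ex_states ex_states \<sigma> (proj_obs ex_obs) ob = 0" if "ob \<notin> {[], [2]}" for ob
    using that by (simp add: prob_obs_ex[OF sched])
  then have "inv_PO ex_states ex_states \<sigma> ex_phi (proj_obs ex_obs) =
     (\<Sum>ob\<in>{[], [2]}. if ob \<in> UNIV then prob_obs ex_states ex_states \<sigma> (proj_obs ex_obs) ob
        / (prob_obs_notphi ex_states ex_states \<sigma> ex_phi (proj_obs ex_obs) ob
           / prob_obs ex_states ex_states \<sigma> (proj_obs ex_obs) ob) else 0)"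
    unfolding inv_PO_def by (intro infsum_eq_sum_if_zero_outside) simp_all
  then show ?thesis
    by (simp add: prob_obs_ex[OF sched] prob_obs_notphi_ex[OF sched] p_def)
qed

lemma run_prob_ex_symmetric_if_memoryless:
  assumes "memoryless_scheduler ex_states ex_states ex_Delta 0 \<sigma>"
  shows "run_prob \<sigma> [(0, 1)] = run_prob \<sigma> [(1, 1)]"
    and "run_prob \<sigma> [(0, 1), (2, 2)] = run_prob \<sigma> [(1, 1), (2, 2)]"
proof -
  have coin: "sched_step \<sigma> [] = fair_coin"
    using assms sched_step_Nil_ex unfolding memoryless_scheduler_def by blast
  have step1: "sched_step \<sigma> [(0, 1)] = sched_step \<sigma> [(1, 1)]"
    by (rule sched_step_eq_if_memoryless[OF assms]) (simp_all add: ex_states_def last_state_def)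
  have step2: "sched_step \<sigma> [(0, 1), (2, 2)] = sched_step \<sigma> [(1, 1), (2, 2)]"
    by (rule sched_step_eq_if_memoryless[OF assms]) (simp_all add: ex_states_def last_state_def)
  show "run_prob \<sigma> [(0, 1)] = run_prob \<sigma> [(1, 1)]"
    by (simp only: run_prob_singleton coin step1) (simp add: pmf_fair_coin)
  show "run_prob \<sigma> [(0, 1), (2, 2)] = run_prob \<sigma> [(1, 1), (2, 2)]"
    by (simp only: run_prob_pair coin step1 step2) (simp add: pmf_fair_coin)
qed

lemma ennreal_double_div_half_ne_top:
  assumes "0 \<le> a"
  shows "(ennreal a + ennreal a) / (ennreal a / (ennreal a + ennreal a)) \<noteq> \<top>"
proof (cases "a = 0")
  case False
  with assms have "0 < a" by simp
  have sum: "ennreal a + ennreal a = ennreal (a + a)"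
    by (rule ennreal_plus[symmetric]) (use assms in simp_all)
  have "ennreal a / ennreal (a + a) = ennreal (a / (a + a))"
    by (rule divide_ennreal) (use \<open>0 < a\<close> in simp_all)
  note sum this
  moreover have "ennreal (a / (a + a)) \<noteq> 0"
    using \<open>0 < a\<close> by simp
  ultimately show ?thesis
    by (simp add: ennreal_divide_eq_top_iff)
qed simp

lemma PO_r_ex_pos_if_memoryless:
  assumes "memoryless_scheduler ex_states ex_states ex_Delta 0 \<sigma>"
  shows "0 < PO_r ex_states ex_states \<sigma> ex_phi (proj_obs ex_obs)"
proof -
  have sched: "scheduler ex_states ex_states ex_Delta 0 \<sigma>"
    using assms unfolding memoryless_scheduler_def by blast
  have "inv_PO ex_states ex_states \<sigma> ex_phi (proj_obs ex_obs) \<noteq> \<top>"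
    unfolding inv_PO_ex[OF sched] run_prob_ex_symmetric_if_memoryless[OF assms]
      ennreal_add_eq_top de_Morgan_disj
    using ennreal_double_div_half_ne_top[OF run_prob_nonneg] by blast
  then show ?thesis
    by (simp add: PO_r_def ennreal_inverse_positive)
qed

definition ex_history_scheduler :: "(nat \<times> nat) list \<Rightarrow> (nat \<times> nat) option pmf pmf" where
  "ex_history_scheduler \<rho> = return_pmf
     (if last_state 0 \<rho> = 0 then fair_coin
      else if \<rho> = [(1, 1)] then return_pmf (Some (2, 2))
      else return_pmf None)"

lemma scheduler_ex_history: "scheduler ex_states ex_states ex_Delta 0 ex_history_scheduler"
  unfolding scheduler_def
proof
  fix \<rho> assume "\<rho> \<in> lists (ex_states \<times> ex_states)"
  then have "last_state 0 \<rho> \<in> ex_states"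
    by (rule last_state_in_states[rotated]) (simp add: ex_states_def)
  then have "last_state 0 \<rho> \<in> {0, 1, 2}"
    by (simp only: ex_states_def)
  then show "set_pmf (ex_history_scheduler \<rho>) \<subseteq> ex_Delta (last_state 0 \<rho>)"
    by (auto simp: ex_history_scheduler_def ex_Delta_def last_state_def)
qed

lemma PO_r_ex_history: "PO_r ex_states ex_states ex_history_scheduler ex_phi (proj_obs ex_obs) = 0"
proof -
  have step: "sched_step ex_history_scheduler \<rho> =
      (if last_state 0 \<rho> = 0 then fair_coin
       else if \<rho> = [(1, 1)] then return_pmf (Some (2, 2)) else return_pmf None)" for \<rho>
    by (simp add: sched_step_def ex_history_scheduler_def join_return_pmf)
  have "run_prob ex_history_scheduler [(0, 1)] = 1 / 2"
    and "run_prob ex_history_scheduler [(1, 1)] = 0"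
    by (simp_all add: run_prob_singleton step last_state_def pmf_fair_coin)
  then have "inv_PO ex_states ex_states ex_history_scheduler ex_phi (proj_obs ex_obs) = \<top>"
    by (simp add: inv_PO_ex[OF scheduler_ex_history])
  then show ?thesis
    by (simp add: PO_r_def)
qed

theorem theorem2:
  shows "\<exists>(Sig::nat set) (Q::nat set) Delta (q0::nat) (phi::(nat \<times> nat) list set) (obs::nat \<Rightarrow> nat option).
     npa Sig Q Delta q0 \<and> regular_lang phi \<and>
     (\<forall>\<sigma>. memoryless_scheduler Sig Q Delta q0 \<sigma> \<longrightarrow>
        PO_r Sig Q \<sigma> phi (proj_obs obs) >
          (INF \<sigma>'\<in>{\<sigma>'. scheduler Sig Q Delta q0 \<sigma>'}. PO_r Sig Q \<sigma>' phi (proj_obs obs)))"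
proof (intro exI conjI allI impI)
  show "npa ex_states ex_states ex_Delta 0" by (rule npa_ex)
  show "regular_lang ex_phi" by (rule regular_lang_ex_phi)
  fix \<sigma> assume memoryless: "memoryless_scheduler ex_states ex_states ex_Delta 0 \<sigma>"
  have "(INF \<sigma>'\<in>{\<sigma>'. scheduler ex_states ex_states ex_Delta 0 \<sigma>'}.
      PO_r ex_states ex_states \<sigma>' ex_phi (proj_obs ex_obs))
      \<le> PO_r ex_states ex_states ex_history_scheduler ex_phi (proj_obs ex_obs)"
    by (rule INF_lower) (simp add: scheduler_ex_history)
  also have "\<dots> = 0"
    by (rule PO_r_ex_history)
  also have "\<dots> < PO_r ex_states ex_states \<sigma> ex_phi (proj_obs ex_obs)"
    using memoryless by (rule PO_r_ex_pos_if_memoryless)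
  finally show "(INF \<sigma>'\<in>{\<sigma>'. scheduler ex_states ex_states ex_Delta 0 \<sigma>'}.
      PO_r ex_states ex_states \<sigma>' ex_phi (proj_obs ex_obs)) < PO_r ex_states ex_states \<sigma> ex_phi (proj_obs ex_obs)" .
qed

end
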